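(* Let $f\colon[0,1]\to[0,1]$ be a unary aggregation function, let $D(f)=\{c\in\,]0,1[\,:\ \bigvee_{x<c}f(x)<f(c)\}$, and for $a\in\,]0,1[$ let $h^f_a(x)=G^1_{f(a)}(x)\wedge\chi_a(x)$. Then for all $x\in[0,1]$, $$f(x)=\bigvee_{q\in\mathbb{Q}\cap]0,1[}h^f_q(x)\ \vee\ \bigvee_{c\in D(f)}h^f_c(x).$$
   Context: A unary aggregation function on $[0,1]$ is a nondecreasing function $f\colon[0,1]\to[0,1]$ with $f(0)=0$, $f(1)=1$. For $a\in[0,1]$, $\chi_a(x)=1$ if $x\ge a$ and $x\neq0$, and $\chi_a(x)=0$ otherwise. For $b\in[0,1]$, $G^1_b(x)=\mathsf{Med}_b(\chi_0(x),\chi_1(x))$, where $\mathsf{Med}_b(x,y)$ is the median of $x,y,b$ (so $G^1_b(0)=0$, $G^1_b(1)=1$, $G^1_b(x)=b$ for $x\in\,]0,1[$). The supremum over the empty set is $0$. *)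

theory Defs
  imports Complex_Main
begin

definition aggr1 :: "(real \<Rightarrow> real) \<Rightarrow> bool" where
  "aggr1 f \<longleftrightarrow> mono_on {0..1} f \<and> f ` {0..1} \<subseteq> {0..1} \<and> f 0 = 0 \<and> f 1 = 1"

definition sup0 :: "real set \<Rightarrow> real" where
  "sup0 S = (if S = {} then 0 else Sup S)"

definition chi :: "real \<Rightarrow> real \<Rightarrow> real" where
  "chi a x = (if x \<ge> a \<and> x \<noteq> 0 then 1 else 0)"

definition Med :: "real \<Rightarrow> real \<Rightarrow> real \<Rightarrow> real" where
  "Med b x y = max (min x y) (min (max x y) b)"

definition G1 :: "real \<Rightarrow> real \<Rightarrow> real" where
  "G1 b x = Med b (chi 0 x) (chi 1 x)"

definition hf :: "(real \<Rightarrow> real) \<Rightarrow> real \<Rightarrow> real \<Rightarrow> real" where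
  "hf f a x = min (G1 (f a) x) (chi a x)"

definition Dset :: "(real \<Rightarrow> real) \<Rightarrow> real set" where
  "Dset f = {c. 0 < c \<and> c < 1 \<and> sup0 (f ` {x. 0 \<le> x \<and> x < c}) < f c}"

end

theory Submission
  imports Defs
begin

text \<open>On \<open>]0,1[\<close> the function \<open>h\<^sup>f\<^sub>a\<close> is the step function jumping from \<open>0\<close> to \<open>f(a)\<close>
  at \<open>a\<close>, so every \<open>h\<^sup>f\<^sub>a\<close> lies below the monotone \<open>f\<close>, and \<open>h\<^sup>f\<^sub>c(c) = f(c)\<close> recovers \<open>f\<close>
  at each point \<open>c\<close> of \<open>D(f)\<close>. At a point \<open>x \<notin> D(f)\<close> the function \<open>f\<close> is
  left-continuous, i.e. \<open>f(x)\<close> is the supremum of the \<open>f(y)\<close> with \<open>y < x\<close>, and each such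
  \<open>f(y)\<close> with \<open>y > 0\<close> is dominated by \<open>f(q) = h\<^sup>f\<^sub>q(x)\<close> for a rational \<open>q\<close> between \<open>y\<close>
  and \<open>x\<close>.\<close>

lemma aggr1_range: "aggr1 f \<Longrightarrow> x \<in> {0..1} \<Longrightarrow> f x \<in> {0..1}"
  unfolding aggr1_def by blast

lemma aggr1_nonneg: "aggr1 f \<Longrightarrow> x \<in> {0..1} \<Longrightarrow> 0 \<le> f x"
  using aggr1_range by fastforce

lemma aggr1_mono: "aggr1 f \<Longrightarrow> 0 \<le> x \<Longrightarrow> x \<le> y \<Longrightarrow> y \<le> 1 \<Longrightarrow> f x \<le> f y"
  unfolding aggr1_def by (auto simp: mono_on_def)

lemma sup0_upper: "s \<in> S \<Longrightarrow> bdd_above S \<Longrightarrow> s \<le> sup0 S"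
  unfolding sup0_def by (auto intro: cSup_upper)

lemma sup0_least: "(\<And>s. s \<in> S \<Longrightarrow> s \<le> b) \<Longrightarrow> 0 \<le> b \<Longrightarrow> sup0 S \<le> b"
  unfolding sup0_def by (auto intro: cSup_least)

lemma sup0_nonneg:
  assumes "\<And>s. s \<in> S \<Longrightarrow> 0 \<le> s" and "bdd_above S"
  shows "0 \<le> sup0 S"
proof (cases "S = {}")
  case False
  then obtain s where "s \<in> S" by blast
  with assms show ?thesis using sup0_upper order_trans by blast
qed (simp add: sup0_def)

lemma hf_at_0: "0 \<le> f a \<Longrightarrow> hf f a 0 = 0"
  by (auto simp: hf_def G1_def Med_def chi_def)

lemma hf_at_1: "0 < a \<Longrightarrow> a \<le> 1 \<Longrightarrow> hf f a 1 = 1"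
  by (auto simp: hf_def G1_def Med_def chi_def)

lemma hf_interior:
  "0 < x \<Longrightarrow> x < 1 \<Longrightarrow> 0 \<le> f a \<Longrightarrow> f a \<le> 1 \<Longrightarrow> hf f a x = (if a \<le> x then f a else 0)"
  by (auto simp: hf_def G1_def Med_def chi_def)

lemma hf_bounds:
  assumes f: "aggr1 f" and a: "a \<in> {0<..<1}" and x: "x \<in> {0..1}"
  shows "0 \<le> hf f a x" and "hf f a x \<le> f x"
proof -
  have fa: "0 \<le> f a" "f a \<le> 1" using aggr1_range[OF f, of a] a by auto
  have "0 \<le> hf f a x \<and> hf f a x \<le> f x"
  proof (cases "x = 0 \<or> x = 1")
    case True
    with f a fa show ?thesis by (auto simp: hf_at_0 hf_at_1 aggr1_def)
  next
    case False
    with f a x fa show ?thesis by (auto simp: hf_interior aggr1_nonneg aggr1_mono)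
  qed
  then show "0 \<le> hf f a x" and "hf f a x \<le> f x" by auto
qed

lemma bdd_above_hf: "aggr1 f \<Longrightarrow> I \<subseteq> {0<..<1} \<Longrightarrow> x \<in> {0..1} \<Longrightarrow> bdd_above ((\<lambda>a. hf f a x) ` I)"
  using hf_bounds(2) by (intro bdd_aboveI[of _ "f x"]) blast

lemma hf_le_sup0:
  "aggr1 f \<Longrightarrow> I \<subseteq> {0<..<1} \<Longrightarrow> a \<in> I \<Longrightarrow> x \<in> {0..1} \<Longrightarrow> hf f a x \<le> sup0 ((\<lambda>a. hf f a x) ` I)"
  by (intro sup0_upper bdd_above_hf) auto

lemma sup0_hf_nonneg:
  "aggr1 f \<Longrightarrow> I \<subseteq> {0<..<1} \<Longrightarrow> x \<in> {0..1} \<Longrightarrow> 0 \<le> sup0 ((\<lambda>a. hf f a x) ` I)"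
  using hf_bounds(1) by (intro sup0_nonneg bdd_above_hf) blast+

lemma sup0_hf_le:
  "aggr1 f \<Longrightarrow> I \<subseteq> {0<..<1} \<Longrightarrow> x \<in> {0..1} \<Longrightarrow> sup0 ((\<lambda>a. hf f a x) ` I) \<le> f x"
  using hf_bounds(2) by (intro sup0_least aggr1_nonneg) blast+

lemma le_sup0_hf_Rats:
  assumes f: "aggr1 f" and x: "0 < x" "x < 1" "x \<notin> Dset f"
  shows "f x \<le> sup0 ((\<lambda>q. hf f q x) ` (\<rat> \<inter> {0<..<1}))" (is "_ \<le> sup0 ?A")
proof -
  have "f x \<le> sup0 (f ` {y. 0 \<le> y \<and> y < x})"
    using x by (auto simp: Dset_def)
  also have "\<dots> \<le> sup0 ?A"
  proof (rule sup0_least)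
    fix s assume "s \<in> f ` {y. 0 \<le> y \<and> y < x}"
    then obtain y where y: "0 \<le> y" "y < x" and s: "s = f y" by auto
    show "s \<le> sup0 ?A"
    proof (cases "y = 0")
      case True
      then show ?thesis using s f x sup0_hf_nonneg[of f "\<rat> \<inter> {0<..<1}" x]
        by (auto simp: aggr1_def)
    next
      case False
      obtain q where q: "q \<in> \<rat>" "y < q" "q < x" using Rats_dense_in_real y by blast
      have "f y \<le> f q" using f q y x by (auto intro: aggr1_mono)
      also have "\<dots> = hf f q x" using f q y x by (simp add: hf_interior aggr1_def image_subset_iff)
      also have "\<dots> \<le> sup0 ?A" using f q y x False by (intro hf_le_sup0) auto
      finally show ?thesis using s by simp
    qed
  qed (use f x in \<open>auto intro: sup0_hf_nonneg\<close>)
  finally show ?thesis .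
qed

lemma le_max_sup0_hf:
  assumes f: "aggr1 f" and x: "x \<in> {0..1}"
  shows "f x \<le> max (sup0 ((\<lambda>q. hf f q x) ` (\<rat> \<inter> {0<..<1}))) (sup0 ((\<lambda>c. hf f c x) ` Dset f))"
proof -
  let ?Q = "\<rat> \<inter> {0<..<1}"
  have Q_sub: "?Q \<subseteq> {0<..<1}" and D_sub: "Dset f \<subseteq> {0<..<1}" by (auto simp: Dset_def)
  consider "x = 0" | "x = 1" | "x \<in> Dset f" | "0 < x" "x < 1" "x \<notin> Dset f"
    using x by fastforce
  then show ?thesis
  proof cases
    case 1
    then have "f x = 0" using f by (simp add: aggr1_def)
    moreover have "0 \<le> sup0 ((\<lambda>q. hf f q x) ` ?Q)" using f Q_sub x by (rule sup0_hf_nonneg)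
    ultimately show ?thesis by linarith
  next
    case 2
    have "(1/2::real) \<in> ?Q" by simp
    then have "hf f (1/2) x \<le> sup0 ((\<lambda>q. hf f q x) ` ?Q)"
      using f x Q_sub by (intro hf_le_sup0)
    then show ?thesis using 2 f hf_at_1[of "1/2" f] by (simp add: aggr1_def)
  next
    case 3
    then have "x \<in> {0<..<1}" by (auto simp: Dset_def)
    then have "hf f x x = f x" using aggr1_range[OF f, of x] by (simp add: hf_interior)
    moreover have "hf f x x \<le> sup0 ((\<lambda>c. hf f c x) ` Dset f)"
      using f D_sub 3 x by (rule hf_le_sup0)
    ultimately show ?thesis by linarith
  next
    case 4
    then have "f x \<le> sup0 ((\<lambda>q. hf f q x) ` ?Q)" using f by (intro le_sup0_hf_Rats)
    then show ?thesis by linarith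
  qed
qed

theorem lemma5:
  fixes f :: "real \<Rightarrow> real"
  assumes "aggr1 f"
  shows "\<forall>x\<in>{0..1}. f x =
           max (sup0 {hf f q x | q. q \<in> \<rat> \<and> 0 < q \<and> q < 1})
               (sup0 {hf f c x | c. c \<in> Dset f})"
proof
  fix x :: real assume x: "x \<in> {0..1}"
  let ?Q = "\<rat> \<inter> {0<..<1}"
  have Q: "{hf f q x | q. q \<in> \<rat> \<and> 0 < q \<and> q < 1} = (\<lambda>q. hf f q x) ` ?Q"
    and D: "{hf f c x | c. c \<in> Dset f} = (\<lambda>c. hf f c x) ` Dset f" by auto
  have "sup0 ((\<lambda>q. hf f q x) ` ?Q) \<le> f x"
    using assms x by (intro sup0_hf_le) auto
  moreover have "sup0 ((\<lambda>c. hf f c x) ` Dset f) \<le> f x"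
    using assms x by (intro sup0_hf_le) (auto simp: Dset_def)
  ultimately show "f x = max (sup0 {hf f q x | q. q \<in> \<rat> \<and> 0 < q \<and> q < 1})
                             (sup0 {hf f c x | c. c \<in> Dset f})"
    unfolding Q D using le_max_sup0_hf[OF assms x] by linarith
qed

end
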